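(* For the submodule $M=[(z-w)^2]$ of $H^2(\mathbb D^2)$, the core operator $C$ of $M$ is Hilbert–Schmidt and \[ \|C\|_{HS}^2=\operatorname{Tr}(C^2)=\frac{4}{3}\pi^2-9. \]
   Context: $H^2(\mathbb D^2)$ is the Hardy space on the unit bidisk with reproducing kernel $K(\lambda,z)=\frac{1}{(1-\overline{\lambda_1}z_1)(1-\overline{\lambda_2}z_2)}$. A submodule $M$ is a closed subspace invariant under multiplication by both coordinate functions; $[q]$ is the smallest submodule containing $q$. If $K^M$ is the reproducing kernel of $M$, the core function is $G^M(\lambda,z)=K^M(\lambda,z)/K(\lambda,z)$ and the core operator $C$ on $H^2(\mathbb D^2)$ is $(Cf)(z)=\int_{\mathbb T^2}G^M(\lambda,z)f(\lambda)\,dm(\lambda)$, $m$ the normalized Lebesgue measure on $\mathbb T^2$. Equivalently $C=I-R_1R_1^*-R_2R_2^*+R_1R_2R_1^*R_2^*$ on $M$ (and $0$ on $M^\perp$), where $R_1,R_2$ are multiplication by $z,w$ restricted to $M$. *)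

theory Defs
  imports "HOL-Analysis.Analysis"
begin

text \<open>H^2 of the bidisk is modelled isometrically by its Taylor coefficient
 sequences: f(z,w) = sum a(i,j) z^i w^j  corresponds to a :: nat \<times> nat \<Rightarrow> complex,
 with square-summable coefficients; the inner product is that of H^2.\<close>

type_synonym h2 = "nat \<times> nat \<Rightarrow> complex"

definition H2 :: "h2 set" where
  "H2 = {f. (\<lambda>k. (cmod (f k))\<^sup>2) summable_on UNIV}"

definition inner2 :: "h2 \<Rightarrow> h2 \<Rightarrow> complex" where
  "inner2 f g = (\<Sum>\<^sub>\<infinity>k. f k * cnj (g k))"

definition norm2 :: "h2 \<Rightarrow> real" where
  "norm2 f = sqrt (\<Sum>\<^sub>\<infinity>k. (cmod (f k))\<^sup>2)"

definition mult_z :: "h2 \<Rightarrow> h2" where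
  "mult_z f = (\<lambda>(i,j). if i = 0 then 0 else f (i - 1, j))"
definition mult_w :: "h2 \<Rightarrow> h2" where
  "mult_w f = (\<lambda>(i,j). if j = 0 then 0 else f (i, j - 1))"
definition mult_z_adj :: "h2 \<Rightarrow> h2" where
  "mult_z_adj f = (\<lambda>(i,j). f (i + 1, j))"
definition mult_w_adj :: "h2 \<Rightarrow> h2" where
  "mult_w_adj f = (\<lambda>(i,j). f (i, j + 1))"

definition submodule :: "h2 set \<Rightarrow> bool" where
  "submodule M \<longleftrightarrow> M \<subseteq> H2 \<and> (\<lambda>_. 0) \<in> M
     \<and> (\<forall>f\<in>M. \<forall>g\<in>M. (\<lambda>k. f k + g k) \<in> M)
     \<and> (\<forall>c. \<forall>f\<in>M. (\<lambda>k. c * f k) \<in> M)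
     \<and> (\<forall>fs f. (\<forall>n. fs n \<in> M) \<and> f \<in> H2 \<and> (\<lambda>n. norm2 (\<lambda>k. fs n k - f k)) \<longlonglongrightarrow> 0 \<longrightarrow> f \<in> M)
     \<and> mult_z ` M \<subseteq> M \<and> mult_w ` M \<subseteq> M"

definition gen_submodule :: "h2 \<Rightarrow> h2 set" where
  "gen_submodule q = \<Inter>{M. submodule M \<and> q \<in> M}"

definition proj :: "h2 set \<Rightarrow> h2 \<Rightarrow> h2" where
  "proj M f = (THE g. g \<in> M \<and> (\<forall>h\<in>M. inner2 (\<lambda>k. f k - g k) h = 0))"

text \<open>Core operator C = P_M - S_z P_M S_z^* - S_w P_M S_w^* + S_z S_w P_M S_z^* S_w^*
  on H^2; this equals I - R1R1^* - R2R2^* + R1R2R1^*R2^* on M and 0 on M^perp.\<close>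
definition core_op :: "h2 set \<Rightarrow> h2 \<Rightarrow> h2" where
  "core_op M f = (\<lambda>k. proj M f k
      - mult_z (proj M (mult_z_adj f)) k
      - mult_w (proj M (mult_w_adj f)) k
      + mult_z (mult_w (proj M (mult_z_adj (mult_w_adj f)))) k)"

definition basis2 :: "nat \<times> nat \<Rightarrow> h2" where
  "basis2 a = (\<lambda>k. if k = a then 1 else 0)"

definition hilbert_schmidt :: "(h2 \<Rightarrow> h2) \<Rightarrow> bool" where
  "hilbert_schmidt T \<longleftrightarrow> (\<lambda>a. (norm2 (T (basis2 a)))\<^sup>2) summable_on UNIV"

definition hs_norm_sq :: "(h2 \<Rightarrow> h2) \<Rightarrow> real" where
  "hs_norm_sq T = (\<Sum>\<^sub>\<infinity>a. (norm2 (T (basis2 a)))\<^sup>2)"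

definition trace2 :: "(h2 \<Rightarrow> h2) \<Rightarrow> complex" where
  "trace2 T = (\<Sum>\<^sub>\<infinity>a. inner2 (T (basis2 a)) (basis2 a))"

text \<open>(z - w)^2 = z^2 - 2zw + w^2.\<close>
definition zw_sq :: h2 where
  "zw_sq = (\<lambda>k. if k = (2,0) \<or> k = (0,2) then 1 else if k = (1,1) then -2 else 0)"

end

theory Submission
  imports Defs
begin

text \<open>A function lies in \<open>[(z - w)\<^sup>2]\<close> iff it vanishes to second order on the
  diagonal \<open>z = w\<close>: for every degree \<open>n\<close> its diagonal coefficient vector
  \<open>(f(k, n - k))\<^sub>k\<close> is orthogonal to \<open>(1, \<dots>, 1)\<close> and \<open>(0, 1, \<dots>, n)\<close>.
  So the submodule is graded by total degree, and on homogeneous polynomials of degree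
  \<open>n\<close> the projection onto its orthogonal complement is the projection of
  \<open>\<complex>\<^sup>n\<^sup>+\<^sup>1\<close> onto the span of these two vectors. The core operator preserves the
  degree; its block of degree \<open>n\<close> is an explicit symmetric matrix whose squared
  Frobenius norm is \<open>8 / n\<^sup>2\<close> for \<open>n \<ge> 3\<close>, \<open>1\<close> for \<open>n = 2\<close> and \<open>0\<close> for
  \<open>n \<le> 1\<close>. Summing over the degrees gives \<open>8 \<pi>\<^sup>2 / 6 - 8 - 1 = 4 \<pi>\<^sup>2 / 3 - 9\<close>
  for both \<open>\<parallel>C\<parallel>\<^sub>H\<^sub>S\<^sup>2\<close> and \<open>Tr C\<^sup>2\<close>.\<close>

section \<open>Square-summable coefficient arrays\<close>

lemma finite_support_H2: "finite {k. f k \<noteq> 0} \<Longrightarrow> f \<in> H2"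
  unfolding H2_def mem_Collect_eq
  by (rule finite_nonzero_values_imp_summable_on) (auto elim: finite_subset[rotated])

lemma H2_add:
  assumes "f \<in> H2" "g \<in> H2" shows "(\<lambda>k. f k + g k) \<in> H2"
  unfolding H2_def mem_Collect_eq
proof (rule summable_on_comparison_test)
  show "(\<lambda>k. 2 * (cmod (f k))\<^sup>2 + 2 * (cmod (g k))\<^sup>2) summable_on UNIV"
    using assms unfolding H2_def by (intro summable_on_add summable_on_cmult_right) auto
  show "(cmod (f k + g k))\<^sup>2 \<le> 2 * (cmod (f k))\<^sup>2 + 2 * (cmod (g k))\<^sup>2" for k
  proof -
    have "(cmod (f k + g k))\<^sup>2 \<le> (cmod (f k) + cmod (g k))\<^sup>2"
      by (simp add: norm_triangle_ineq power_mono)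
    also have "\<dots> \<le> 2 * (cmod (f k))\<^sup>2 + 2 * (cmod (g k))\<^sup>2"
      using sum_squares_bound[of "cmod (f k)" "cmod (g k)"] by (simp add: power2_sum)
    finally show ?thesis .
  qed
qed simp

lemma H2_cmult: "f \<in> H2 \<Longrightarrow> (\<lambda>k. c * f k) \<in> H2"
  unfolding H2_def by (simp add: norm_mult power_mult_distrib summable_on_cmult_right)

lemma H2_diff: "f \<in> H2 \<Longrightarrow> g \<in> H2 \<Longrightarrow> (\<lambda>k. f k - g k) \<in> H2"
  using H2_add[of f "\<lambda>k. (-1) * g k"] H2_cmult[of g "-1"] by simp

lemma H2_inner_summable:
  assumes "f \<in> H2" "g \<in> H2" shows "(\<lambda>k. f k * cnj (g k)) summable_on UNIV"
proof (rule abs_summable_summable, rule summable_on_comparison_test)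
  show "(\<lambda>k. (cmod (f k))\<^sup>2 + (cmod (g k))\<^sup>2) summable_on UNIV"
    using assms unfolding H2_def by (intro summable_on_add) auto
  show "norm (f k * cnj (g k)) \<le> (cmod (f k))\<^sup>2 + (cmod (g k))\<^sup>2" for k
  proof -
    have "cmod (f k) * cmod (g k) \<le> (cmod (f k))\<^sup>2 + (cmod (g k))\<^sup>2"
      using sum_squares_bound[of "cmod (f k)" "cmod (g k)"]
        mult_nonneg_nonneg[OF norm_ge_zero norm_ge_zero, of "f k" "g k"] by linarith
    then show ?thesis by (simp add: norm_mult)
  qed
qed simp

lemma power2_norm2: "(norm2 f)\<^sup>2 = (\<Sum>\<^sub>\<infinity>k. (cmod (f k))\<^sup>2)"
  unfolding norm2_def by (simp add: infsum_nonneg)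

lemma norm_le_norm2:
  assumes "f \<in> H2" shows "cmod (f b) \<le> norm2 f"
proof -
  have "(\<Sum>\<^sub>\<infinity>k\<in>{b}. (cmod (f k))\<^sup>2) \<le> (\<Sum>\<^sub>\<infinity>k. (cmod (f k))\<^sup>2)"
    using assms unfolding H2_def by (intro infsum_mono_neutral) auto
  then have "(cmod (f b))\<^sup>2 \<le> (norm2 f)\<^sup>2" by (simp add: power2_norm2)
  then show ?thesis by (rule power2_le_imp_le) (simp add: norm2_def infsum_nonneg)
qed

lemma inner2_self:
  assumes "f \<in> H2" shows "inner2 f f = of_real ((norm2 f)\<^sup>2)"
proof -
  have "((\<lambda>k. of_real ((cmod (f k))\<^sup>2)) has_sum complex_of_real ((norm2 f)\<^sup>2)) UNIV"
    using assms unfolding H2_def power2_norm2 by (intro has_sum_of_real) simp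
  then show ?thesis
    unfolding inner2_def complex_norm_square by (rule infsumI)
qed

lemma inner2_diff_left:
  assumes "f \<in> H2" "g \<in> H2" "h \<in> H2"
  shows "inner2 (\<lambda>k. f k - g k) h = inner2 f h - inner2 g h"
proof -
  have "inner2 (\<lambda>k. f k - g k) h = (\<Sum>\<^sub>\<infinity>k. f k * cnj (h k) + - (g k * cnj (h k)))"
    unfolding inner2_def by (simp add: algebra_simps)
  also have "\<dots> = inner2 f h + - inner2 g h"
    unfolding inner2_def infsum_uminus[symmetric]
    using H2_inner_summable[OF assms(1,3)] H2_inner_summable[OF assms(2,3)]
    by (intro infsum_add) (auto simp: summable_on_uminus)
  finally show ?thesis by simp
qed

lemma H2_norm2_eq_0D: "f \<in> H2 \<Longrightarrow> norm2 f = 0 \<Longrightarrow> f = (\<lambda>_. 0)"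
  using norm_le_norm2 by fastforce

lemma proj_eqI:
  assumes diff: "\<And>a b. a \<in> M \<Longrightarrow> b \<in> M \<Longrightarrow> (\<lambda>k. a k - b k) \<in> M"
    and M: "M \<subseteq> H2" and f: "f \<in> H2" and g: "g \<in> M"
    and orth: "\<And>h. h \<in> M \<Longrightarrow> inner2 (\<lambda>k. f k - g k) h = 0"
  shows "proj M f = g"
  unfolding proj_def
proof (rule the_equality)
  show "g \<in> M \<and> (\<forall>h\<in>M. inner2 (\<lambda>k. f k - g k) h = 0)" using g orth by blast
next
  fix g' assume g': "g' \<in> M \<and> (\<forall>h\<in>M. inner2 (\<lambda>k. f k - g' k) h = 0)"
  define d where "d = (\<lambda>k. g k - g' k)"
  have d: "d \<in> M" unfolding d_def using diff g g' by blast
  have H2: "g \<in> H2" "g' \<in> H2" "d \<in> H2" using g g' d M by auto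
  have "(\<lambda>k. (f k - g' k) - (f k - g k)) = d"
    unfolding d_def by (simp add: fun_eq_iff)
  then have "inner2 d d = inner2 (\<lambda>k. f k - g' k) d - inner2 (\<lambda>k. f k - g k) d"
    using inner2_diff_left[OF H2_diff[OF f H2(2)] H2_diff[OF f H2(1)] H2(3)] by simp
  also have "\<dots> = 0" using g' orth d by simp
  finally have "norm2 d = 0" using inner2_self[OF H2(3)] by simp
  then have "d = (\<lambda>_. 0)" using H2_norm2_eq_0D H2(3) by blast
  then show "g' = g" unfolding d_def by (simp add: fun_eq_iff)
qed

lemma summable_on_extend_by_zero:
  fixes g :: "'a \<Rightarrow> real"
  assumes "inj h" "g summable_on UNIV"
    and "\<And>x. G (h x) = g x" and "\<And>y. y \<notin> range h \<Longrightarrow> G y = 0"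
  shows "G summable_on UNIV"
proof -
  have "G summable_on range h"
    using assms(1-3) by (subst summable_on_reindex) (auto simp: comp_def)
  then show ?thesis
    by (rule summable_on_cong_neutral[THEN iffD1, rotated -1]) (use assms(4) in auto)
qed

lemma mult_z_H2:
  assumes "f \<in> H2" shows "mult_z f \<in> H2"
  unfolding H2_def mem_Collect_eq
proof (rule summable_on_extend_by_zero)
  show "inj (\<lambda>(i, j). (Suc i, j))" by (auto simp: inj_def)
  show "(\<lambda>k. (cmod (f k))\<^sup>2) summable_on UNIV" using assms by (simp add: H2_def)
  show "(cmod (mult_z f ((\<lambda>(i, j). (Suc i, j)) k)))\<^sup>2 = (cmod (f k))\<^sup>2" for k
    by (cases k) (simp add: mult_z_def)
  show "(cmod (mult_z f k))\<^sup>2 = 0" if "k \<notin> range (\<lambda>(i, j). (Suc i, j))" for k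
    using that by (cases k; cases "fst k") (auto simp: mult_z_def)
qed

lemma mult_w_H2:
  assumes "f \<in> H2" shows "mult_w f \<in> H2"
  unfolding H2_def mem_Collect_eq
proof (rule summable_on_extend_by_zero)
  show "inj (\<lambda>(i, j). (i, Suc j))" by (auto simp: inj_def)
  show "(\<lambda>k. (cmod (f k))\<^sup>2) summable_on UNIV" using assms by (simp add: H2_def)
  show "(cmod (mult_w f ((\<lambda>(i, j). (i, Suc j)) k)))\<^sup>2 = (cmod (f k))\<^sup>2" for k
    by (cases k) (simp add: mult_w_def)
  show "(cmod (mult_w f k))\<^sup>2 = 0" if "k \<notin> range (\<lambda>(i, j). (i, Suc j))" for k
    using that by (cases k; cases "snd k") (auto simp: mult_w_def)
qed

section \<open>Homogeneous polynomials\<close>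

definition homogeneous :: "nat \<Rightarrow> h2 \<Rightarrow> bool" where
  "homogeneous n f \<longleftrightarrow> (\<forall>i j. i + j \<noteq> n \<longrightarrow> f (i, j) = 0)"

lemma homogeneousD: "homogeneous n f \<Longrightarrow> i + j \<noteq> n \<Longrightarrow> f (i, j) = 0"
  unfolding homogeneous_def by blast

lemma homogeneous_H2:
  assumes "homogeneous n f" shows "f \<in> H2"
proof (rule finite_support_H2, rule finite_subset)
  show "{k. f k \<noteq> 0} \<subseteq> (\<lambda>i. (i, n - i)) ` {..n}"
  proof
    fix k assume k: "k \<in> {k. f k \<noteq> 0}"
    obtain i j where ij: "k = (i, j)" by (cases k)
    then have "i + j = n" using k homogeneousD[OF assms] by blast
    then show "k \<in> (\<lambda>i. (i, n - i)) ` {..n}"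
      unfolding ij image_iff by (intro bexI[of _ i]) auto
  qed
qed simp

lemma infsum_homogeneous:
  fixes F :: "nat \<times> nat \<Rightarrow> 'a::{comm_monoid_add,t2_space}"
  assumes "\<And>i j. i + j \<noteq> n \<Longrightarrow> F (i, j) = 0"
  shows "(\<Sum>\<^sub>\<infinity>k. F k) = (\<Sum>i\<le>n. F (i, n - i))"
proof -
  have "(\<Sum>\<^sub>\<infinity>k. F k) = (\<Sum>\<^sub>\<infinity>k\<in>(\<lambda>i. (i, n - i)) ` {..n}. F k)"
    by (rule infsum_cong_neutral) (use assms in \<open>auto simp: image_iff\<close>)
  also have "\<dots> = (\<Sum>i\<le>n. F (i, n - i))"
    by (simp add: sum.reindex inj_on_def)
  finally show ?thesis .
qed

lemma inner2_homogeneous: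
  "homogeneous n f \<Longrightarrow> inner2 f h = (\<Sum>i\<le>n. f (i, n - i) * cnj (h (i, n - i)))"
  unfolding inner2_def by (rule infsum_homogeneous) (simp add: homogeneousD)

lemma norm2_homogeneous:
  "homogeneous n f \<Longrightarrow> (norm2 f)\<^sup>2 = (\<Sum>i\<le>n. (cmod (f (i, n - i)))\<^sup>2)"
  unfolding power2_norm2 by (rule infsum_homogeneous) (simp add: homogeneousD)

lemma bij_betw_diagonals:
  "bij_betw (\<lambda>(n, k). (k, n - k)) (SIGMA n:UNIV. {..n}) (UNIV :: (nat \<times> nat) set)"
  by (rule bij_betwI[where g="\<lambda>(i, j). (i + j, i)"]) auto

lemma has_sum_iff_diagonal_sums:
  fixes g :: "nat \<times> nat \<Rightarrow> real"
  assumes nonneg: "\<And>k. 0 \<le> g k"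
  shows "(g has_sum S) UNIV \<longleftrightarrow> (\<lambda>n. \<Sum>k\<le>n. g (k, n - k)) sums S"
proof -
  define G where "G = (\<lambda>(n, k). g (k, n - k))"
  have rows: "((\<lambda>k. G (n, k)) has_sum (\<Sum>k\<le>n. g (k, n - k))) {..n}" for n
    unfolding G_def by (simp add: has_sum_finiteI)
  have "(g has_sum S) UNIV \<longleftrightarrow> (G has_sum S) (SIGMA n:UNIV. {..n})"
    unfolding G_def using has_sum_reindex_bij_betw[OF bij_betw_diagonals, of g S]
    by (simp only: case_prod_unfold)
  also have "\<dots> \<longleftrightarrow> ((\<lambda>n. \<Sum>k\<le>n. g (k, n - k)) has_sum S) UNIV"
  proof
    assume "(G has_sum S) (SIGMA n:UNIV. {..n})"
    then show "((\<lambda>n. \<Sum>k\<le>n. g (k, n - k)) has_sum S) UNIV"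
      by (rule has_sum_Sigma') (rule rows)
  next
    assume diag: "((\<lambda>n. \<Sum>k\<le>n. g (k, n - k)) has_sum S) UNIV"
    have "G summable_on (SIGMA n:UNIV. {..n})"
      by (rule summable_on_SigmaI[OF rows has_sum_imp_summable[OF diag]]) (simp add: G_def nonneg)
    then show "(G has_sum S) (SIGMA n:UNIV. {..n})"
      by (rule has_sum_SigmaI[OF rows diag])
  qed
  also have "\<dots> \<longleftrightarrow> (\<lambda>n. \<Sum>k\<le>n. g (k, n - k)) sums S"
  proof
    assume "((\<lambda>n. \<Sum>k\<le>n. g (k, n - k)) has_sum S) UNIV"
    then show "(\<lambda>n. \<Sum>k\<le>n. g (k, n - k)) sums S" by (rule has_sum_imp_sums)
  next
    assume "(\<lambda>n. \<Sum>k\<le>n. g (k, n - k)) sums S"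
    then show "((\<lambda>n. \<Sum>k\<le>n. g (k, n - k)) has_sum S) UNIV"
      by (rule sums_nonneg_imp_has_sum) (simp add: sum_nonneg nonneg)
  qed
  finally show ?thesis .
qed

lemma norm2_truncation_tendsto:
  assumes f: "f \<in> H2"
  shows "(\<lambda>m. norm2 (\<lambda>k. (if fst k + snd k < m then f k else 0) - f k)) \<longlonglongrightarrow> 0"
proof -
  define a where "a n = (\<Sum>k\<le>n. (cmod (f (k, n - k)))\<^sup>2)" for n
  define S where "S = (\<Sum>\<^sub>\<infinity>k. (cmod (f k))\<^sup>2)"
  have a: "a sums S"
    unfolding a_def S_def using f unfolding H2_def
    by (subst has_sum_iff_diagonal_sums[symmetric]) auto
  have tail: "norm2 (\<lambda>k. (if fst k + snd k < m then f k else 0) - f k) = sqrt (S - (\<Sum>n<m. a n))"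
    for m
  proof -
    define g where "g k = (if fst k + snd k < m then 0 else (cmod (f k))\<^sup>2)" for k
    have "(\<lambda>n. \<Sum>k\<le>n. g (k, n - k)) = (\<lambda>n. a n - (if n \<in> {..<m} then a n else 0))"
      by (auto simp: fun_eq_iff g_def a_def)
    moreover have "(\<lambda>n. a n - (if n \<in> {..<m} then a n else 0)) sums (S - (\<Sum>n<m. a n))"
      by (intro sums_diff a sums_If_finite_set) simp
    ultimately have "(g has_sum (S - (\<Sum>n<m. a n))) UNIV"
      by (subst has_sum_iff_diagonal_sums) (auto simp: g_def)
    then have "(\<Sum>\<^sub>\<infinity>k. g k) = S - (\<Sum>n<m. a n)"
      by (rule infsumI)
    moreover have "(\<lambda>k. (cmod ((if fst k + snd k < m then f k else 0) - f k))\<^sup>2) = g"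
      by (auto simp: fun_eq_iff g_def)
    ultimately show ?thesis unfolding norm2_def by simp
  qed
  have "(\<lambda>m. sqrt (S - (\<Sum>n<m. a n))) \<longlonglongrightarrow> sqrt (S - S)"
    using a unfolding sums_def by (intro tendsto_real_sqrt tendsto_diff tendsto_const)
  then show ?thesis unfolding tail by simp
qed

section \<open>The submodule generated by \<open>(z - w)\<^sup>2\<close>\<close>

text \<open>\<open>diag_sum n f\<close> and \<open>diag_moment n f\<close> are the coefficients of \<open>t\<^sup>n\<close> in \<open>f(t, t)\<close> and
  of \<open>t\<^sup>n\<^sup>-\<^sup>1\<close> in \<open>(\<partial>f/\<partial>z)(t, t)\<close>, so \<open>Mzw\<close> consists of the functions vanishing to second
  order on the diagonal.\<close>

definition diag_sum :: "nat \<Rightarrow> h2 \<Rightarrow> complex" where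
  "diag_sum n f = (\<Sum>k\<le>n. f (k, n - k))"

definition diag_moment :: "nat \<Rightarrow> h2 \<Rightarrow> complex" where
  "diag_moment n f = (\<Sum>k\<le>n. of_nat k * f (k, n - k))"

definition Mzw :: "h2 set" where
  "Mzw = {f \<in> H2. \<forall>n. diag_sum n f = 0 \<and> diag_moment n f = 0}"

lemma diag_sum_lincomb: "diag_sum n (\<lambda>k. f k + c * g k) = diag_sum n f + c * diag_sum n g"
  unfolding diag_sum_def by (simp add: sum.distrib sum_distrib_left)

lemma diag_moment_lincomb:
  "diag_moment n (\<lambda>k. f k + c * g k) = diag_moment n f + c * diag_moment n g"
  unfolding diag_moment_def by (simp add: sum.distrib sum_distrib_left algebra_simps)

lemma Mzw_lincomb: "f \<in> Mzw \<Longrightarrow> g \<in> Mzw \<Longrightarrow> (\<lambda>k. f k + c * g k) \<in> Mzw"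
  unfolding Mzw_def by (simp add: diag_sum_lincomb diag_moment_lincomb H2_add H2_cmult)

lemma Mzw_H2: "f \<in> Mzw \<Longrightarrow> f \<in> H2"
  unfolding Mzw_def by simp

lemma Mzw_zero: "(\<lambda>_. 0) \<in> Mzw"
  unfolding Mzw_def diag_sum_def diag_moment_def by (simp add: homogeneous_H2 homogeneous_def)

lemma Mzw_diff: "f \<in> Mzw \<Longrightarrow> g \<in> Mzw \<Longrightarrow> (\<lambda>k. f k - g k) \<in> Mzw"
  using Mzw_lincomb[of f g "-1"] by simp

lemma diag_sum_mult_z:
  "diag_sum 0 (mult_z f) = 0" "diag_sum (Suc n) (mult_z f) = diag_sum n f"
  unfolding diag_sum_def by (simp add: mult_z_def, subst sum.atMost_Suc_shift, simp add: mult_z_def)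

lemma diag_moment_mult_z:
  "diag_moment 0 (mult_z f) = 0"
  "diag_moment (Suc n) (mult_z f) = diag_moment n f + diag_sum n f"
  unfolding diag_moment_def diag_sum_def
  by (simp add: mult_z_def, subst sum.atMost_Suc_shift, simp add: mult_z_def sum.distrib algebra_simps)

lemma diag_sum_mult_w:
  "diag_sum 0 (mult_w f) = 0" "diag_sum (Suc n) (mult_w f) = diag_sum n f"
  unfolding diag_sum_def by (simp_all add: mult_w_def Suc_diff_le)

lemma diag_moment_mult_w:
  "diag_moment 0 (mult_w f) = 0" "diag_moment (Suc n) (mult_w f) = diag_moment n f"
  unfolding diag_moment_def by (simp_all add: mult_w_def Suc_diff_le)

lemma mult_z_in_Mzw_iff:
  assumes "f \<in> H2" shows "mult_z f \<in> Mzw \<longleftrightarrow> f \<in> Mzw"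
proof -
  have "(\<forall>n. diag_sum n (mult_z f) = 0 \<and> diag_moment n (mult_z f) = 0)
    \<longleftrightarrow> (\<forall>n. diag_sum n f = 0 \<and> diag_moment n f = 0)"
  proof safe
    fix n assume "\<forall>n. diag_sum n (mult_z f) = 0 \<and> diag_moment n (mult_z f) = 0"
    then have "diag_sum (Suc n) (mult_z f) = 0" "diag_moment (Suc n) (mult_z f) = 0" by blast+
    then show "diag_sum n f = 0" "diag_moment n f = 0"
      by (simp_all add: diag_sum_mult_z diag_moment_mult_z)
  next
    fix n assume "\<forall>n. diag_sum n f = 0 \<and> diag_moment n f = 0"
    then show "diag_sum n (mult_z f) = 0" "diag_moment n (mult_z f) = 0"
      by (cases n; simp add: diag_sum_mult_z diag_moment_mult_z)+
  qed
  then show ?thesis unfolding Mzw_def using assms mult_z_H2 by auto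
qed

lemma mult_w_Mzw:
  assumes "f \<in> Mzw" shows "mult_w f \<in> Mzw"
proof -
  have "diag_sum n (mult_w f) = 0 \<and> diag_moment n (mult_w f) = 0" for n
    using assms unfolding Mzw_def by (cases n) (simp_all add: diag_sum_mult_w diag_moment_mult_w)
  then show ?thesis using assms mult_w_H2 unfolding Mzw_def by blast
qed

lemma Mzw_closed:
  assumes fs: "\<And>n. fs n \<in> Mzw" and f: "f \<in> H2"
    and lim: "(\<lambda>n. norm2 (\<lambda>k. fs n k - f k)) \<longlonglongrightarrow> 0"
  shows "f \<in> Mzw"
proof -
  have coeff: "(\<lambda>m. fs m k) \<longlonglongrightarrow> f k" for k
  proof -
    have "(\<lambda>m. fs m k - f k) \<longlonglongrightarrow> 0"
      by (rule Lim_null_comparison[OF _ lim])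
         (use norm_le_norm2[OF H2_diff[OF Mzw_H2[OF fs] f]] in simp)
    then show ?thesis by (simp add: LIM_zero_iff)
  qed
  have "(\<lambda>m. diag_sum n (fs m)) \<longlonglongrightarrow> diag_sum n f"
    "(\<lambda>m. diag_moment n (fs m)) \<longlonglongrightarrow> diag_moment n f" for n
    unfolding diag_sum_def diag_moment_def by (intro tendsto_intros coeff)+
  moreover have "diag_sum n (fs m) = 0" "diag_moment n (fs m) = 0" for n m
    using fs unfolding Mzw_def by auto
  ultimately have "(\<lambda>m. 0) \<longlonglongrightarrow> diag_sum n f" "(\<lambda>m. 0) \<longlonglongrightarrow> diag_moment n f" for n
    by simp_all
  then have "diag_sum n f = 0 \<and> diag_moment n f = 0" for n
    by (simp add: LIMSEQ_const_iff)
  then show ?thesis using f unfolding Mzw_def by blast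
qed

lemma submodule_Mzw: "submodule Mzw"
  unfolding submodule_def
proof (intro conjI allI ballI impI subsetI)
  show "f \<in> H2" if "f \<in> Mzw" for f using that by (rule Mzw_H2)
  show "(\<lambda>_. 0) \<in> Mzw" by (rule Mzw_zero)
  show "(\<lambda>k. f k + g k) \<in> Mzw" if "f \<in> Mzw" "g \<in> Mzw" for f g
    using Mzw_lincomb[OF that, of 1] by simp
  show "(\<lambda>k. c * f k) \<in> Mzw" if "f \<in> Mzw" for c f
    using Mzw_lincomb[OF Mzw_zero that, of c] by simp
  show "f \<in> Mzw" if "(\<forall>n. fs n \<in> Mzw) \<and> f \<in> H2 \<and> (\<lambda>n. norm2 (\<lambda>k. fs n k - f k)) \<longlonglongrightarrow> 0"
    for fs f using that Mzw_closed by blast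
  show "h \<in> Mzw" if "h \<in> mult_z ` Mzw" for h
    using that mult_z_in_Mzw_iff[OF Mzw_H2] by blast
  show "h \<in> Mzw" if "h \<in> mult_w ` Mzw" for h
    using that mult_w_Mzw by blast
qed

lemma homogeneous_diag_sums:
  assumes "homogeneous m f" "n \<noteq> m"
  shows "diag_sum n f = 0" "diag_moment n f = 0"
  using assms unfolding diag_sum_def diag_moment_def by (simp_all add: homogeneousD)

lemma homogeneous_in_Mzw_iff:
  assumes "homogeneous n f"
  shows "f \<in> Mzw \<longleftrightarrow> diag_sum n f = 0 \<and> diag_moment n f = 0"
  unfolding Mzw_def using homogeneous_H2[OF assms] homogeneous_diag_sums[OF assms]
  by (auto; metis)

lemma zw_sq_homogeneous: "homogeneous 2 zw_sq"
  unfolding homogeneous_def zw_sq_def by auto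

lemma zw_sq_Mzw: "zw_sq \<in> Mzw"
  unfolding homogeneous_in_Mzw_iff[OF zw_sq_homogeneous] diag_sum_def diag_moment_def
  by (simp add: zw_sq_def numeral_2_eq_2 atMost_Suc)

lemma submoduleD:
  assumes "submodule N"
  shows "(\<lambda>_. 0) \<in> N"
    and "f \<in> N \<Longrightarrow> g \<in> N \<Longrightarrow> (\<lambda>k. f k + g k) \<in> N"
    and "f \<in> N \<Longrightarrow> (\<lambda>k. c * f k) \<in> N"
    and "f \<in> N \<Longrightarrow> mult_z f \<in> N"
    and "f \<in> N \<Longrightarrow> mult_w f \<in> N"
    and "(\<And>n. fs n \<in> N) \<Longrightarrow> f \<in> H2 \<Longrightarrow> (\<lambda>n. norm2 (\<lambda>k. fs n k - f k)) \<longlonglongrightarrow> 0 \<Longrightarrow> f \<in> N"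
  using assms unfolding submodule_def by blast+

lemma submodule_sum:
  assumes "submodule N" "finite A" "\<And>x. x \<in> A \<Longrightarrow> v x \<in> N"
  shows "(\<lambda>k. \<Sum>x\<in>A. v x k) \<in> N"
  using assms(2,3)
  by (induction A rule: finite_induct) (simp_all add: submoduleD(1,2)[OF assms(1)])

lemma submodule_mult_w_power:
  "submodule N \<Longrightarrow> f \<in> N \<Longrightarrow> (mult_w ^^ p) f \<in> N"
  by (induction p) (simp_all add: submoduleD(5))

lemma mult_w_power_apply: "(mult_w ^^ p) f (i, j) = (if p \<le> j then f (i, j - p) else 0)"
  by (induction p arbitrary: j) (auto simp: mult_w_def)

lemma homogeneous_mult_z_adj: "homogeneous (Suc n) f \<Longrightarrow> homogeneous n (mult_z_adj f)"
  unfolding homogeneous_def mult_z_adj_def by simp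

lemma homogeneous_mult_w_adj: "homogeneous (Suc n) f \<Longrightarrow> homogeneous n (mult_w_adj f)"
  unfolding homogeneous_def mult_w_adj_def by simp

lemma mult_z_mult_z_adj: "(\<And>j. f (0, j) = 0) \<Longrightarrow> mult_z (mult_z_adj f) = f"
  by (auto simp: fun_eq_iff mult_z_def mult_z_adj_def)

lemma homogeneous_Mzw_low_degree:
  assumes "homogeneous n f" "n \<le> 1" "f \<in> Mzw"
  shows "f = (\<lambda>_. 0)"
proof
  fix k :: "nat \<times> nat"
  obtain i j where k: "k = (i, j)" by (cases k)
  have "diag_sum n f = 0" "diag_moment n f = 0"
    using assms(3) unfolding Mzw_def by auto
  then have "f (i, n - i) = 0" if "i \<le> n"
    using assms(2) that unfolding diag_sum_def diag_moment_def
    by (cases n; cases i) simp_all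
  then show "f k = 0"
    using homogeneousD[OF assms(1), of i j] unfolding k by (cases "i + j = n") auto
qed

text \<open>Subtracting a multiple of \<open>w\<^sup>p (z - w)\<^sup>2\<close> kills the coefficient of \<open>w\<^sup>p\<^sup>+\<^sup>2\<close>, and what
  remains is divisible by \<open>z\<close> within \<open>Mzw\<close>; this gives an induction on the degree.\<close>

lemma homogeneous_Mzw_in_submodule:
  assumes N: "submodule N" "zw_sq \<in> N"
  shows "homogeneous n f \<Longrightarrow> f \<in> Mzw \<Longrightarrow> f \<in> N"
proof (induction n arbitrary: f rule: less_induct)
  case (less n)
  show ?case
  proof (cases "n \<le> 1")
    case True
    then have "f = (\<lambda>_. 0)" using homogeneous_Mzw_low_degree less.prems by blast
    then show ?thesis using submoduleD(1)[OF N(1)] by simp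
  next
    case False
    then obtain p where n: "n = Suc (Suc p)" by (intro that[of "n - 2"]) simp
    define W where "W = (mult_w ^^ p) zw_sq"
    define g where "g = (\<lambda>k. f k + (- f (0, n)) * W k)"
    have W: "W \<in> N" "W \<in> Mzw"
      unfolding W_def using submodule_mult_w_power[OF N] submodule_mult_w_power[OF submodule_Mzw zw_sq_Mzw]
      by blast+
    have W_hom: "homogeneous n W" and W0: "W (0, n) = 1"
      unfolding W_def homogeneous_def n by (auto simp: mult_w_power_apply zw_sq_def)
    have g: "g \<in> Mzw" "homogeneous n g"
      unfolding g_def using Mzw_lincomb[OF less.prems(2) W(2)] less.prems(1) W_hom
      by (blast, simp add: homogeneous_def)
    have g0: "g (0, j) = 0" for j
      using homogeneousD[OF g(2), of 0 j] W0 by (cases "j = n") (auto simp: g_def)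
    have hom: "homogeneous (Suc p) (mult_z_adj g)"
      using g(2) n by (simp add: homogeneous_mult_z_adj)
    have "mult_z_adj g \<in> Mzw"
      using g(1) mult_z_in_Mzw_iff[OF homogeneous_H2[OF hom]] by (simp add: mult_z_mult_z_adj[of g, OF g0])
    then have "mult_z_adj g \<in> N"
      using less.IH[OF _ hom] n by simp
    then have "g \<in> N"
      using submoduleD(4)[OF N(1)] mult_z_mult_z_adj[of g, OF g0] by metis
    then have "(\<lambda>k. g k + f (0, n) * W k) \<in> N"
      using submoduleD(2,3)[OF N(1)] W(1) by blast
    then show ?thesis by (simp add: g_def)
  qed
qed

definition hom_part :: "nat \<Rightarrow> h2 \<Rightarrow> h2" where
  "hom_part n f = (\<lambda>(i, j). if i + j = n then f (i, j) else 0)"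

lemma homogeneous_hom_part: "homogeneous n (hom_part n f)"
  by (simp add: homogeneous_def hom_part_def)

lemma hom_part_Mzw:
  assumes "f \<in> Mzw" shows "hom_part n f \<in> Mzw"
proof -
  have "diag_sum n f = 0" "diag_moment n f = 0"
    using assms unfolding Mzw_def by auto
  moreover have "diag_sum n (hom_part n f) = diag_sum n f"
    "diag_moment n (hom_part n f) = diag_moment n f"
    unfolding diag_sum_def diag_moment_def hom_part_def by simp_all
  ultimately show ?thesis
    by (simp add: homogeneous_in_Mzw_iff[OF homogeneous_hom_part])
qed

lemma Mzw_subset_submodule:
  assumes N: "submodule N" "zw_sq \<in> N"
  shows "Mzw \<subseteq> N"
proof
  fix f assume f: "f \<in> Mzw"
  define trunc where "trunc m = (\<lambda>k. \<Sum>n<m. hom_part n f k)" for m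
  have "trunc m \<in> N" for m
    unfolding trunc_def using homogeneous_Mzw_in_submodule[OF N homogeneous_hom_part hom_part_Mzw[OF f]]
    by (intro submodule_sum[OF N(1)]) auto
  moreover have "trunc m = (\<lambda>k. if fst k + snd k < m then f k else 0)" for m
    by (auto simp: fun_eq_iff trunc_def hom_part_def split: prod.splits)
  then have "(\<lambda>m. norm2 (\<lambda>k. trunc m k - f k)) \<longlonglongrightarrow> 0"
    using norm2_truncation_tendsto[OF Mzw_H2[OF f]] by simp
  ultimately show "f \<in> N"
    using submoduleD(6)[OF N(1)] Mzw_H2[OF f] by blast
qed

theorem gen_submodule_zw_sq: "gen_submodule zw_sq = Mzw"
  unfolding gen_submodule_def using submodule_Mzw zw_sq_Mzw Mzw_subset_submodule by blast

section \<open>Projection onto the submodule\<close>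

definition centred :: "nat \<Rightarrow> nat \<Rightarrow> real" where
  "centred n i = real i - real n / 2"

text \<open>On the diagonal vectors of degree \<open>n\<close>, the orthogonal complement of \<open>Mzw\<close> is spanned by
  \<open>1\<close> and \<open>centred n\<close>, which are orthogonal with squared norms \<open>n + 1\<close> and
  \<open>n (n + 1) (n + 2) / 12\<close>; \<open>perp_kernel n\<close> is the matrix of the orthogonal projection onto
  their span.\<close>

definition perp_kernel :: "nat \<Rightarrow> nat \<Rightarrow> nat \<Rightarrow> real" where
  "perp_kernel n i k =
     1 / (real n + 1) + 12 / (real n * (real n + 1) * (real n + 2)) * (centred n i * centred n k)"

definition perp_proj :: "nat \<Rightarrow> h2 \<Rightarrow> h2" where
  "perp_proj n f = (\<lambda>(i, j). if i + j = n then (\<Sum>k\<le>n. of_real (perp_kernel n i k) * f (k, n - k)) else 0)"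

lemma sum_of_nat_atMost: "(\<Sum>i\<le>n. real i) = real n * (real n + 1) / 2"
  by (induction n) (simp_all add: field_simps)

lemma sum_of_nat_sq_atMost: "(\<Sum>i\<le>n. (real i)\<^sup>2) = real n * (real n + 1) * (2 * real n + 1) / 6"
  by (induction n) (simp_all add: field_simps power2_eq_square)

lemma sum_centred: "(\<Sum>i\<le>n. centred n i) = 0"
proof -
  have "(\<Sum>i\<le>n. centred n i) = (\<Sum>i\<le>n. real i) - (real n + 1) * (real n / 2)"
    unfolding centred_def by (simp add: sum_subtractf)
  then show ?thesis by (simp add: sum_of_nat_atMost algebra_simps)
qed

lemma sum_centred_sq: "(\<Sum>i\<le>n. (centred n i)\<^sup>2) = real n * (real n + 1) * (real n + 2) / 12"
proof -
  have "(\<Sum>i\<le>n. (centred n i)\<^sup>2)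
      = (\<Sum>i\<le>n. (real i)\<^sup>2) - real n * (\<Sum>i\<le>n. real i) + (real n + 1) * (real n / 2)\<^sup>2"
    unfolding centred_def power2_diff
    by (simp add: sum.distrib sum_subtractf sum_distrib_left algebra_simps)
  then show ?thesis
    unfolding sum_of_nat_atMost sum_of_nat_sq_atMost by (simp add: field_simps power2_eq_square)
qed

lemma perp_kernel_sym: "perp_kernel n i k = perp_kernel n k i"
  unfolding perp_kernel_def by (simp only: mult.commute[of "centred n i"])

lemma perp_kernel_affine: "\<exists>a b. \<forall>i. perp_kernel n i k = a + b * real i"
proof -
  have "a + d * ((x - m) * y) = (a - d * y * m) + d * y * x" for a d x y m :: real
    by (simp add: algebra_simps)
  then show ?thesis unfolding perp_kernel_def centred_def by blast
qed

lemma sum_perp_kernel: "(\<Sum>i\<le>n. perp_kernel n i k) = 1"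
proof -
  define c where "c = 12 / (real n * (real n + 1) * (real n + 2))"
  have "(\<Sum>i\<le>n. perp_kernel n i k) = (\<Sum>i\<le>n. 1 / (real n + 1)) + c * centred n k * (\<Sum>i\<le>n. centred n i)"
    unfolding perp_kernel_def c_def[symmetric] by (simp add: sum.distrib sum_distrib_left mult_ac)
  then show ?thesis by (simp add: sum_centred)
qed

lemma sum_of_nat_perp_kernel:
  assumes "k \<le> n" shows "(\<Sum>i\<le>n. real i * perp_kernel n i k) = real k"
proof (cases "n = 0")
  case True then show ?thesis using assms by simp
next
  case False
  define c where "c = 12 / (real n * (real n + 1) * (real n + 2))"
  have "(\<Sum>i\<le>n. centred n i * perp_kernel n i k)
      = (\<Sum>i\<le>n. 1 / (real n + 1) * centred n i + c * centred n k * (centred n i)\<^sup>2)"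
    unfolding perp_kernel_def c_def[symmetric]
    by (intro sum.cong) (simp_all add: algebra_simps power2_eq_square)
  also have "\<dots> = 1 / (real n + 1) * (\<Sum>i\<le>n. centred n i) + c * centred n k * (\<Sum>i\<le>n. (centred n i)\<^sup>2)"
    by (simp add: sum.distrib sum_distrib_left)
  also have "\<dots> = c * (real n * (real n + 1) * (real n + 2) / 12) * centred n k"
    by (simp add: sum_centred sum_centred_sq)
  also have "\<dots> = centred n k"
    using False by (simp add: c_def)
  finally have "(\<Sum>i\<le>n. centred n i * perp_kernel n i k) = centred n k" .
  moreover have "(\<Sum>i\<le>n. real i * perp_kernel n i k)
      = (\<Sum>i\<le>n. centred n i * perp_kernel n i k) + real n / 2 * (\<Sum>i\<le>n. perp_kernel n i k)"
    unfolding sum_distrib_left sum.distrib[symmetric]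
    by (intro sum.cong) (simp_all add: centred_def algebra_simps)
  ultimately show ?thesis by (simp add: sum_perp_kernel centred_def)
qed

lemma sum_perp_kernel_eq_0:
  fixes x :: "nat \<Rightarrow> complex"
  assumes "(\<Sum>i\<le>n. x i) = 0" "(\<Sum>i\<le>n. of_nat i * x i) = 0"
  shows "(\<Sum>i\<le>n. of_real (perp_kernel n i k) * x i) = 0"
proof -
  obtain a b where ab: "\<And>i. perp_kernel n i k = a + b * real i"
    using perp_kernel_affine by blast
  have "(\<Sum>i\<le>n. of_real (perp_kernel n i k) * x i)
      = of_real a * (\<Sum>i\<le>n. x i) + of_real b * (\<Sum>i\<le>n. of_nat i * x i)"
    unfolding ab sum_distrib_left sum.distrib[symmetric]
    by (intro sum.cong) (simp_all add: algebra_simps)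
  then show ?thesis using assms by simp
qed

lemma homogeneous_perp_proj: "homogeneous n (perp_proj n f)"
  unfolding homogeneous_def perp_proj_def by simp

lemma perp_proj_diag: "i \<le> n \<Longrightarrow>
  perp_proj n f (i, n - i) = (\<Sum>k\<le>n. of_real (perp_kernel n i k) * f (k, n - k))"
  unfolding perp_proj_def by simp

lemma diag_sum_perp_proj: "diag_sum n (perp_proj n f) = diag_sum n f"
proof -
  have "diag_sum n (perp_proj n f) = (\<Sum>i\<le>n. \<Sum>k\<le>n. of_real (perp_kernel n i k) * f (k, n - k))"
    unfolding diag_sum_def by (simp add: perp_proj_diag)
  also have "\<dots> = (\<Sum>k\<le>n. \<Sum>i\<le>n. of_real (perp_kernel n i k) * f (k, n - k))"
    by (rule sum.swap)
  also have "\<dots> = diag_sum n f"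
    unfolding diag_sum_def sum_distrib_right[symmetric]
    by (simp flip: of_real_sum add: sum_perp_kernel)
  finally show ?thesis .
qed

lemma diag_moment_perp_proj: "diag_moment n (perp_proj n f) = diag_moment n f"
proof -
  have "diag_moment n (perp_proj n f)
      = (\<Sum>i\<le>n. \<Sum>k\<le>n. of_real (real i * perp_kernel n i k) * f (k, n - k))"
    unfolding diag_moment_def by (simp add: perp_proj_diag sum_distrib_left mult.assoc)
  also have "\<dots> = (\<Sum>k\<le>n. \<Sum>i\<le>n. of_real (real i * perp_kernel n i k) * f (k, n - k))"
    by (rule sum.swap)
  also have "\<dots> = (\<Sum>k\<le>n. of_real (\<Sum>i\<le>n. real i * perp_kernel n i k) * f (k, n - k))"
    by (simp only: of_real_sum sum_distrib_right)
  also have "\<dots> = diag_moment n f"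
    unfolding diag_moment_def by (intro sum.cong) (simp_all add: sum_of_nat_perp_kernel)
  finally show ?thesis .
qed

lemma inner2_perp_proj_Mzw:
  assumes "h \<in> Mzw" shows "inner2 (perp_proj n f) h = 0"
proof -
  have "(\<Sum>i\<le>n. cnj (h (i, n - i))) = cnj (diag_sum n h)"
    "(\<Sum>i\<le>n. of_nat i * cnj (h (i, n - i))) = cnj (diag_moment n h)"
    unfolding diag_sum_def diag_moment_def by simp_all
  then have h: "(\<Sum>i\<le>n. cnj (h (i, n - i))) = 0" "(\<Sum>i\<le>n. of_nat i * cnj (h (i, n - i))) = 0"
    using assms unfolding Mzw_def by auto
  have "inner2 (perp_proj n f) h
      = (\<Sum>i\<le>n. \<Sum>k\<le>n. of_real (perp_kernel n i k) * (f (k, n - k) * cnj (h (i, n - i))))"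
    unfolding inner2_homogeneous[OF homogeneous_perp_proj]
    by (simp add: perp_proj_diag sum_distrib_left sum_distrib_right mult_ac)
  also have "\<dots> = (\<Sum>k\<le>n. \<Sum>i\<le>n. of_real (perp_kernel n i k) * (f (k, n - k) * cnj (h (i, n - i))))"
    by (rule sum.swap)
  also have "\<dots> = (\<Sum>k\<le>n. f (k, n - k) * (\<Sum>i\<le>n. of_real (perp_kernel n i k) * cnj (h (i, n - i))))"
    by (simp add: sum_distrib_left mult_ac)
  also have "\<dots> = 0"
    by (simp add: sum_perp_kernel_eq_0[OF h])
  finally show ?thesis .
qed

lemma proj_Mzw_homogeneous:
  assumes f: "homogeneous n f"
  shows "proj Mzw f = (\<lambda>x. f x - perp_proj n f x)"
proof (rule proj_eqI)
  have hom: "homogeneous n (\<lambda>x. f x - perp_proj n f x)"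
    using f homogeneous_perp_proj[of n f] unfolding homogeneous_def by simp
  have "diag_sum n (\<lambda>x. f x - perp_proj n f x) = 0" "diag_moment n (\<lambda>x. f x - perp_proj n f x) = 0"
    using diag_sum_lincomb[of n f "-1" "perp_proj n f"] diag_moment_lincomb[of n f "-1" "perp_proj n f"]
    by (simp_all add: diag_sum_perp_proj diag_moment_perp_proj)
  then show "(\<lambda>x. f x - perp_proj n f x) \<in> Mzw"
    by (simp add: homogeneous_in_Mzw_iff[OF hom])
  show "inner2 (\<lambda>k. f k - (f k - perp_proj n f k)) h = 0" if "h \<in> Mzw" for h
    using inner2_perp_proj_Mzw[OF that] by simp
qed (use Mzw_diff Mzw_H2 homogeneous_H2[OF f] in auto)

section \<open>The core operator on homogeneous polynomials\<close>

lemma sum_atMost_shift_indicator: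
  fixes m s n :: nat
  assumes "m + s \<le> n"
  shows "(\<Sum>k\<le>m. g (k + s)) = (\<Sum>k\<le>n. if s \<le> k \<and> k \<le> m + s then g k else 0)"
proof -
  have "sum g ({..n} \<inter> {s..m + s}) = (\<Sum>k\<le>n. if k \<in> {s..m + s} then g k else 0)"
    by (rule sum.inter_restrict) simp
  also have "{..n} \<inter> {s..m + s} = {0 + s..m + s}" using assms by auto
  also have "sum g {0 + s..m + s} = (\<Sum>k\<le>m. g (k + s))"
    by (simp only: sum.shift_bounds_cl_nat_ivl atLeast0AtMost)
  finally show ?thesis by simp
qed

lemma proj_Mzw_zero: "proj Mzw (\<lambda>_. 0) = (\<lambda>_. 0)"
  by (rule proj_eqI) (auto simp: Mzw_zero Mzw_diff Mzw_H2 inner2_def)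

lemma proj_Mzw_apply:
  "homogeneous n f \<Longrightarrow> proj Mzw f (i, j)
     = f (i, j) - (if i + j = n then (\<Sum>k\<le>n. of_real (perp_kernel n i k) * f (k, n - k)) else 0)"
  by (simp add: proj_Mzw_homogeneous perp_proj_def)

lemma mult_z_proj_mult_z_adj:
  assumes f: "homogeneous n f"
  shows "mult_z (proj Mzw (mult_z_adj f)) (i, j) = (if i = 0 then 0 else f (i, j)
    - (if i + j = n then (\<Sum>k\<le>n. of_real (if 1 \<le> k then perp_kernel (n - 1) (i - 1) (k - 1) else 0)
         * f (k, n - k)) else 0))"
proof (cases n)
  case 0
  then have "mult_z_adj f = (\<lambda>_. 0)"
    using f by (auto simp: fun_eq_iff mult_z_adj_def homogeneous_def)
  then show ?thesis using f 0 by (simp add: proj_Mzw_zero mult_z_def homogeneousD)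
next
  case (Suc m)
  have "mult_z (proj Mzw (mult_z_adj f)) (i, j) = (if i = 0 then 0 else f (i, j)
      - (if i + j = n then (\<Sum>k\<le>m. of_real (perp_kernel m (i - 1) k) * f (k + 1, m - k)) else 0))"
  proof -
    have "mult_z_adj f (i', j') = f (i' + 1, j')" for i' j' by (simp add: mult_z_adj_def)
    moreover have "0 < i \<Longrightarrow> i - 1 + 1 = i" "0 < i \<Longrightarrow> i - 1 + j = m \<longleftrightarrow> i + j = n"
      using Suc by auto
    ultimately show ?thesis
      using homogeneous_mult_z_adj[of m f] f Suc
      by (simp add: mult_z_def proj_Mzw_apply[of m "mult_z_adj f"])
  qed
  also have "(\<Sum>k\<le>m. of_real (perp_kernel m (i - 1) k) * f (k + 1, m - k))
      = (\<Sum>k\<le>n. of_real (if 1 \<le> k then perp_kernel (n - 1) (i - 1) (k - 1) else 0) * f (k, n - k))"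
    using sum_atMost_shift_indicator[of m 1 n "\<lambda>k. of_real (perp_kernel m (i - 1) (k - 1)) * f (k, n - k)"]
    by (auto simp: Suc intro!: sum.cong)
  finally show ?thesis .
qed

lemma mult_w_proj_mult_w_adj:
  assumes f: "homogeneous n f"
  shows "mult_w (proj Mzw (mult_w_adj f)) (i, j) = (if j = 0 then 0 else f (i, j)
    - (if i + j = n then (\<Sum>k\<le>n. of_real (if k < n then perp_kernel (n - 1) i k else 0)
         * f (k, n - k)) else 0))"
proof (cases n)
  case 0
  then have "mult_w_adj f = (\<lambda>_. 0)"
    using f by (auto simp: fun_eq_iff mult_w_adj_def homogeneous_def)
  then show ?thesis using f 0 by (simp add: proj_Mzw_zero mult_w_def homogeneousD)
next
  case (Suc m)
  have "mult_w (proj Mzw (mult_w_adj f)) (i, j) = (if j = 0 then 0 else f (i, j)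
      - (if i + j = n then (\<Sum>k\<le>m. of_real (perp_kernel m i k) * f (k, m - k + 1)) else 0))"
  proof -
    have "mult_w_adj f (i', j') = f (i', j' + 1)" for i' j' by (simp add: mult_w_adj_def)
    moreover have "0 < j \<Longrightarrow> j - 1 + 1 = j" "0 < j \<Longrightarrow> i + (j - 1) = m \<longleftrightarrow> i + j = n"
      using Suc by auto
    ultimately show ?thesis
      using homogeneous_mult_w_adj[of m f] f Suc
      by (simp add: mult_w_def proj_Mzw_apply[of m "mult_w_adj f"])
  qed
  also have "(\<Sum>k\<le>m. of_real (perp_kernel m i k) * f (k, m - k + 1))
      = (\<Sum>k\<le>n. of_real (if k < n then perp_kernel (n - 1) i k else 0) * f (k, n - k))"
    using sum_atMost_shift_indicator[of m 0 n "\<lambda>k. of_real (perp_kernel m i k) * f (k, n - k)"]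
    by (auto simp: Suc Suc_diff_le less_Suc_eq_le intro!: sum.cong)
  finally show ?thesis .
qed

lemma mult_zw_proj_mult_zw_adj:
  assumes f: "homogeneous n f"
  shows "mult_z (mult_w (proj Mzw (mult_z_adj (mult_w_adj f)))) (i, j) = (if i = 0 \<or> j = 0 then 0
    else f (i, j) - (if i + j = n then (\<Sum>k\<le>n. of_real (if 1 \<le> k \<and> k < n
         then perp_kernel (n - 2) (i - 1) (k - 1) else 0) * f (k, n - k)) else 0))"
proof (cases "n \<le> 1")
  case True
  then have "mult_z_adj (mult_w_adj f) = (\<lambda>_. 0)"
    using f by (auto simp: fun_eq_iff mult_z_adj_def mult_w_adj_def homogeneous_def)
  moreover have "0 < i \<Longrightarrow> 0 < j \<Longrightarrow> f (i, j) = 0"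
    using f True by (simp add: homogeneousD)
  ultimately show ?thesis using True by (simp add: proj_Mzw_zero mult_z_def mult_w_def)
next
  case False
  then obtain m where n: "n = Suc (Suc m)" by (intro that[of "n - 2"]) simp
  have hom: "homogeneous m (mult_z_adj (mult_w_adj f))"
    using f n by (simp add: homogeneous_mult_z_adj homogeneous_mult_w_adj)
  have "mult_z (mult_w (proj Mzw (mult_z_adj (mult_w_adj f)))) (i, j) = (if i = 0 \<or> j = 0 then 0
      else f (i, j) - (if i + j = n then (\<Sum>k\<le>m. of_real (perp_kernel m (i - 1) k)
        * f (k + 1, m - k + 1)) else 0))"
  proof -
    have "mult_z_adj (mult_w_adj f) (i', j') = f (i' + 1, j' + 1)" for i' j'
      by (simp add: mult_z_adj_def mult_w_adj_def)
    moreover have "0 < i \<Longrightarrow> i - 1 + 1 = i" "0 < j \<Longrightarrow> j - 1 + 1 = j"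
      "0 < i \<Longrightarrow> 0 < j \<Longrightarrow> i - 1 + (j - 1) = m \<longleftrightarrow> i + j = n"
      using n by auto
    ultimately show ?thesis
      using hom by (simp add: mult_z_def mult_w_def proj_Mzw_apply[OF hom])
  qed
  also have "(\<Sum>k\<le>m. of_real (perp_kernel m (i - 1) k) * f (k + 1, m - k + 1))
      = (\<Sum>k\<le>n. of_real (if 1 \<le> k \<and> k < n then perp_kernel (n - 2) (i - 1) (k - 1) else 0)
          * f (k, n - k))"
    using sum_atMost_shift_indicator[of m 1 n "\<lambda>k. of_real (perp_kernel m (i - 1) (k - 1)) * f (k, n - k)"]
    by (auto simp: n Suc_diff_le less_Suc_eq_le intro!: sum.cong)
  finally show ?thesis .
qed

text \<open>On degree \<open>n \<ge> 1\<close> the identity parts of the four terms of \<open>core_op\<close> cancel, leaving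
  \<open>- Q\<^sub>n + S\<^sub>z Q\<^sub>n\<^sub>-\<^sub>1 S\<^sub>z\<^sup>* + S\<^sub>w Q\<^sub>n\<^sub>-\<^sub>1 S\<^sub>w\<^sup>* - S\<^sub>z S\<^sub>w Q\<^sub>n\<^sub>-\<^sub>2 S\<^sub>z\<^sup>* S\<^sub>w\<^sup>*\<close> with \<open>Q\<^sub>m = perp_proj m\<close>.\<close>

definition core_matrix :: "nat \<Rightarrow> nat \<Rightarrow> nat \<Rightarrow> real" where
  "core_matrix n i k = (if n = 0 then 0 else
     - perp_kernel n i k
     + (if 1 \<le> i \<and> 1 \<le> k then perp_kernel (n - 1) (i - 1) (k - 1) else 0)
     + (if i < n \<and> k < n then perp_kernel (n - 1) i k else 0)
     - (if 1 \<le> i \<and> i < n \<and> 1 \<le> k \<and> k < n then perp_kernel (n - 2) (i - 1) (k - 1) else 0))"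

lemma sum_core_matrix_expand:
  fixes F :: "nat \<Rightarrow> complex"
  assumes "n \<noteq> 0" "i + j = n"
  shows "(\<Sum>k\<le>n. of_real (core_matrix n i k) * F k)
    = - (\<Sum>k\<le>n. of_real (perp_kernel n i k) * F k)
      + (if i = 0 then 0 else \<Sum>k\<le>n. of_real (if 1 \<le> k then perp_kernel (n - 1) (i - 1) (k - 1) else 0) * F k)
      + (if j = 0 then 0 else \<Sum>k\<le>n. of_real (if k < n then perp_kernel (n - 1) i k else 0) * F k)
      - (if i = 0 \<or> j = 0 then 0 else \<Sum>k\<le>n. of_real (if 1 \<le> k \<and> k < n
           then perp_kernel (n - 2) (i - 1) (k - 1) else 0) * F k)"
proof -
  have j: "j = 0 \<longleftrightarrow> \<not> i < n" using assms(2) by auto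
  have "of_real (core_matrix n i k) * F k
      = - (of_real (perp_kernel n i k) * F k)
      + (if i = 0 then 0 else of_real (if 1 \<le> k then perp_kernel (n - 1) (i - 1) (k - 1) else 0) * F k)
      + (if j = 0 then 0 else of_real (if k < n then perp_kernel (n - 1) i k else 0) * F k)
      - (if i = 0 \<or> j = 0 then 0 else of_real (if 1 \<le> k \<and> k < n
           then perp_kernel (n - 2) (i - 1) (k - 1) else 0) * F k)" for k
    using assms(1) j by (simp add: core_matrix_def algebra_simps)
  then show ?thesis
    by (simp add: sum.distrib sum_subtractf sum_negf if_distrib[of "\<lambda>x. x * _"] cong: if_cong)
qed

lemma core_op_homogeneous:
  assumes f: "homogeneous n f"
  shows "core_op Mzw f (i, j)
    = (if i + j = n then (\<Sum>k\<le>n. of_real (core_matrix n i k) * f (k, n - k)) else 0)"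
proof -
  have core: "core_op Mzw f (i, j) = proj Mzw f (i, j)
      - mult_z (proj Mzw (mult_z_adj f)) (i, j) - mult_w (proj Mzw (mult_w_adj f)) (i, j)
      + mult_z (mult_w (proj Mzw (mult_z_adj (mult_w_adj f)))) (i, j)"
    unfolding core_op_def ..
  note terms = proj_Mzw_apply[OF f] mult_z_proj_mult_z_adj[OF f]
    mult_w_proj_mult_w_adj[OF f] mult_zw_proj_mult_zw_adj[OF f]
  consider "i + j \<noteq> n" | "i + j = n" "n = 0" | "i + j = n" "n \<noteq> 0" by blast
  then show ?thesis
  proof cases
    case 1
    then show ?thesis unfolding core terms by (simp add: homogeneousD[OF f])
  next
    case 2
    then show ?thesis unfolding core terms by (simp add: core_matrix_def perp_kernel_def)
  next
    case 3
    then show ?thesis unfolding core terms sum_core_matrix_expand[OF 3(2,1)] by simp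
  qed
qed

section \<open>The Hilbert--Schmidt norm\<close>

lemma factors_nonzero_ge3:
  fixes y :: real
  assumes "3 \<le> y"
  shows "y \<noteq> 0" "y - 1 \<noteq> 0" "y + 1 \<noteq> 0" "y - 2 \<noteq> 0" "y + 2 \<noteq> 0"
  using assms by auto

lemma core_interior_identity:
  fixes y u v :: real
  assumes "3 \<le> y"
  shows "- (1 / (y + 1) + 12 / (y * (y + 1) * (y + 2)) * (u * v))
      + (1 / y + 12 / ((y - 1) * y * (y + 1)) * ((u - 1 / 2) * (v - 1 / 2)))
      + (1 / y + 12 / ((y - 1) * y * (y + 1)) * ((u + 1 / 2) * (v + 1 / 2)))
      - (1 / (y - 1) + 12 / ((y - 2) * (y - 1) * y) * (u * v))
    = 4 / ((y - 1) * y * (y + 1)) - 144 / ((y - 2) * (y - 1) * y * (y + 1) * (y + 2)) * (u * v)"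
  using factors_nonzero_ge3[OF assms] by (simp_all add: divide_simps; algebra)+

lemma core_edge_identities:
  fixes y v :: real
  assumes "3 \<le> y"
  shows "- (1 / (y + 1) + 12 / (y * (y + 1) * (y + 2)) * (- (y / 2) * v))
      + (1 / y + 12 / ((y - 1) * y * (y + 1)) * (- ((y - 1) / 2) * (v + 1 / 2)))
    = - 2 / (y * (y + 1)) - 12 / (y * (y + 1) * (y + 2)) * v"
    and "- (1 / (y + 1) + 12 / (y * (y + 1) * (y + 2)) * (y / 2 * v))
      + (1 / y + 12 / ((y - 1) * y * (y + 1)) * ((y - 1) / 2 * (v - 1 / 2)))
    = - 2 / (y * (y + 1)) + 12 / (y * (y + 1) * (y + 2)) * v"
  using factors_nonzero_ge3[OF assms] by (simp_all add: divide_simps; algebra)+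

lemma core_corner_identities:
  fixes y :: real
  assumes "3 \<le> y"
  shows "- (1 / (y + 1) + 12 / (y * (y + 1) * (y + 2)) * (- (y / 2) * - (y / 2)))
      + (1 / y + 12 / ((y - 1) * y * (y + 1)) * (- ((y - 1) / 2) * - ((y - 1) / 2)))
      = 4 * (y - 1) / (y * (y + 1) * (y + 2))"
    and "- (1 / (y + 1) + 12 / (y * (y + 1) * (y + 2)) * (y / 2 * (y / 2)))
      + (1 / y + 12 / ((y - 1) * y * (y + 1)) * ((y - 1) / 2 * ((y - 1) / 2)))
      = 4 * (y - 1) / (y * (y + 1) * (y + 2))"
    and "- (1 / (y + 1) + 12 / (y * (y + 1) * (y + 2)) * (- (y / 2) * (y / 2)))
      = 2 * (y - 1) / ((y + 1) * (y + 2))"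
  using factors_nonzero_ge3[OF assms] by (simp_all add: divide_simps; algebra)+

lemma core_block_identity:
  fixes y :: real
  assumes "3 \<le> y"
  defines "U \<equiv> (y - 2) * (y - 1) * y / 12"
  shows "2 * (4 * (y - 1) / (y * (y + 1) * (y + 2)))\<^sup>2 + 2 * (2 * (y - 1) / ((y + 1) * (y + 2)))\<^sup>2
    + 4 * ((y - 1) * (- 2 / (y * (y + 1)))\<^sup>2 + (12 / (y * (y + 1) * (y + 2)))\<^sup>2 * U)
    + ((y - 1)\<^sup>2 * (4 / ((y - 1) * y * (y + 1)))\<^sup>2
       + (144 / ((y - 2) * (y - 1) * y * (y + 1) * (y + 2)))\<^sup>2 * U\<^sup>2)
    = 8 / y\<^sup>2"
  using factors_nonzero_ge3[OF assms(1)] unfolding U_def by (simp add: divide_simps; algebra)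

lemma perp_kernel_pred:
  assumes "1 \<le> n"
  shows "perp_kernel (n - 1) a b
    = 1 / real n + 12 / ((real n - 1) * real n * (real n + 1)) * (centred (n - 1) a * centred (n - 1) b)"
proof -
  have "real (n - 1) = real n - 1" "real n - 1 + 1 = real n" "real n - 1 + 2 = real n + 1"
    using assms by (simp_all add: of_nat_diff)
  then show ?thesis by (simp only: perp_kernel_def)
qed

lemma perp_kernel_pred2:
  assumes "2 \<le> n"
  shows "perp_kernel (n - 2) a b
    = 1 / (real n - 1) + 12 / ((real n - 2) * (real n - 1) * real n) * (centred (n - 2) a * centred (n - 2) b)"
proof -
  have "real (n - 2) = real n - 2" "real n - 2 + 1 = real n - 1" "real n - 2 + 2 = real n"
    using assms by (simp_all add: of_nat_diff)
  then show ?thesis by (simp only: perp_kernel_def)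
qed

lemma centred_shifts:
  assumes "1 \<le> k" "2 \<le> n"
  shows "centred (n - 1) (k - 1) = centred n k - 1 / 2"
    and "centred (n - 1) k = centred n k + 1 / 2"
    and "centred (n - 2) (k - 1) = centred n k"
  using assms by (simp_all add: centred_def of_nat_diff field_simps)

lemma centred_ends:
  assumes "1 \<le> n"
  shows "centred n 0 = - (real n / 2)" "centred n n = real n / 2"
    "centred (n - 1) 0 = - ((real n - 1) / 2)" "centred (n - 1) (n - 1) = (real n - 1) / 2"
  using assms by (simp_all add: centred_def of_nat_diff field_simps)

lemma core_matrix_sym: "core_matrix n i k = core_matrix n k i"
  unfolding core_matrix_def perp_kernel_sym[of n i] perp_kernel_sym[of "n - 1" "i - 1"]
    perp_kernel_sym[of "n - 1" i] perp_kernel_sym[of "n - 2" "i - 1"]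
  by (simp add: conj_ac)

lemma sum_atMost_ends:
  fixes g :: "nat \<Rightarrow> 'a::comm_monoid_add"
  assumes "1 \<le> n" shows "(\<Sum>i\<le>n. g i) = g 0 + (\<Sum>i\<in>{1..<n}. g i) + g n"
proof -
  have "{..n} = insert 0 (insert n {1..<n})" using assms by auto
  then show ?thesis using assms by (simp add: add_ac)
qed

lemma sum_inner_centred: "1 \<le> n \<Longrightarrow> (\<Sum>i\<in>{1..<n}. centred n i) = 0"
  using sum_centred[of n] sum_atMost_ends[of n "centred n"] by (simp add: centred_def)

lemma sum_inner_centred_sq:
  "1 \<le> n \<Longrightarrow> (\<Sum>i\<in>{1..<n}. (centred n i)\<^sup>2) = (real n - 2) * (real n - 1) * real n / 12"
  using sum_centred_sq[of n] sum_atMost_ends[of n "\<lambda>i. (centred n i)\<^sup>2"]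
  by (simp add: centred_def field_simps power2_eq_square)

lemma sum_inner_affine_sq:
  assumes "1 \<le> n"
  shows "(\<Sum>i\<in>{1..<n}. (c + t * centred n i)\<^sup>2)
    = (real n - 1) * c\<^sup>2 + t\<^sup>2 * ((real n - 2) * (real n - 1) * real n / 12)"
proof -
  have "(\<Sum>i\<in>{1..<n}. (c + t * centred n i)\<^sup>2)
      = (\<Sum>i\<in>{1..<n}. c\<^sup>2) + 2 * c * t * (\<Sum>i\<in>{1..<n}. centred n i)
        + t\<^sup>2 * (\<Sum>i\<in>{1..<n}. (centred n i)\<^sup>2)"
    by (simp add: power2_sum sum.distrib sum_distrib_left power_mult_distrib mult_ac)
  then show ?thesis
    unfolding sum_inner_centred[OF assms] sum_inner_centred_sq[OF assms] using assms by (simp add: of_nat_diff)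
qed

lemma sum_sq_centred_block:
  fixes M :: "nat \<Rightarrow> nat \<Rightarrow> real"
  assumes n: "1 \<le> n"
    and corners: "M 0 0 = p" "M n n = p" "M 0 n = q" "M n 0 = q"
    and first: "\<And>i. i \<in> {1..<n} \<Longrightarrow> M 0 i = e - d * centred n i \<and> M i 0 = e - d * centred n i"
    and last: "\<And>i. i \<in> {1..<n} \<Longrightarrow> M n i = e + d * centred n i \<and> M i n = e + d * centred n i"
    and interior: "\<And>i k. i \<in> {1..<n} \<Longrightarrow> k \<in> {1..<n} \<Longrightarrow> M i k = a - b * (centred n i * centred n k)"
  defines "U \<equiv> (real n - 2) * (real n - 1) * real n / 12"
  shows "(\<Sum>k\<le>n. \<Sum>i\<le>n. (M i k)\<^sup>2)
    = 2 * p\<^sup>2 + 2 * q\<^sup>2 + 4 * ((real n - 1) * e\<^sup>2 + d\<^sup>2 * U) + ((real n - 1)\<^sup>2 * a\<^sup>2 + b\<^sup>2 * U\<^sup>2)"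
proof -
  have affine: "(\<Sum>i\<in>{1..<n}. (c + t * centred n i)\<^sup>2) = (real n - 1) * c\<^sup>2 + t\<^sup>2 * U" for c t
    unfolding U_def by (rule sum_inner_affine_sq[OF n])
  have "(\<Sum>i\<in>{1..<n}. (M i 0)\<^sup>2) = (\<Sum>i\<in>{1..<n}. (e + (- d) * centred n i)\<^sup>2)"
    "(\<Sum>i\<in>{1..<n}. (M i n)\<^sup>2) = (\<Sum>i\<in>{1..<n}. (e + d * centred n i)\<^sup>2)"
    using first last by simp_all
  then have outer: "(\<Sum>i\<le>n. (M i 0)\<^sup>2) = p\<^sup>2 + ((real n - 1) * e\<^sup>2 + d\<^sup>2 * U) + q\<^sup>2"
    "(\<Sum>i\<le>n. (M i n)\<^sup>2) = q\<^sup>2 + ((real n - 1) * e\<^sup>2 + d\<^sup>2 * U) + p\<^sup>2"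
    unfolding sum_atMost_ends[OF n] affine by (simp_all add: corners)
  have column: "(\<Sum>i\<le>n. (M i k)\<^sup>2)
      = (e + (- d) * centred n k)\<^sup>2 + ((real n - 1) * a\<^sup>2 + b\<^sup>2 * U * (centred n k)\<^sup>2)
        + (e + d * centred n k)\<^sup>2" if k: "k \<in> {1..<n}" for k
  proof -
    have "(\<Sum>i\<in>{1..<n}. (M i k)\<^sup>2) = (\<Sum>i\<in>{1..<n}. (a + (- (b * centred n k)) * centred n i)\<^sup>2)"
      using interior[OF _ k] by (simp add: mult_ac)
    then show ?thesis
      unfolding sum_atMost_ends[OF n] affine using first[OF k] last[OF k]
      by (simp add: power_mult_distrib)
  qed
  have "(\<Sum>k\<in>{1..<n}. \<Sum>i\<le>n. (M i k)\<^sup>2)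
      = (\<Sum>k\<in>{1..<n}. (e + (- d) * centred n k)\<^sup>2) + (\<Sum>k\<in>{1..<n}. (real n - 1) * a\<^sup>2)
        + b\<^sup>2 * U * (\<Sum>k\<in>{1..<n}. (centred n k)\<^sup>2) + (\<Sum>k\<in>{1..<n}. (e + d * centred n k)\<^sup>2)"
    by (simp add: column sum.distrib sum_distrib_left)
  also have "\<dots> = 2 * ((real n - 1) * e\<^sup>2 + d\<^sup>2 * U) + ((real n - 1)\<^sup>2 * a\<^sup>2 + b\<^sup>2 * U\<^sup>2)"
    unfolding affine sum_inner_centred_sq[OF n] U_def[symmetric]
    using n by (simp add: of_nat_diff power2_eq_square)
  finally show ?thesis
    unfolding sum_atMost_ends[OF n, of "\<lambda>k. \<Sum>i\<le>n. (M i k)\<^sup>2"] outer by simp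
qed

context
  fixes n :: nat
  assumes n: "3 \<le> n"
begin

lemma core_matrix_interior:
  assumes "1 \<le> i" "i < n" "1 \<le> k" "k < n"
  shows "core_matrix n i k = 4 / ((real n - 1) * real n * (real n + 1))
    - 144 / ((real n - 2) * (real n - 1) * real n * (real n + 1) * (real n + 2)) * (centred n i * centred n k)"
proof -
  have "core_matrix n i k = - perp_kernel n i k + perp_kernel (n - 1) (i - 1) (k - 1)
      + perp_kernel (n - 1) i k - perp_kernel (n - 2) (i - 1) (k - 1)"
    using assms n by (simp add: core_matrix_def)
  also have "\<dots> = 4 / ((real n - 1) * real n * (real n + 1))
    - 144 / ((real n - 2) * (real n - 1) * real n * (real n + 1) * (real n + 2)) * (centred n i * centred n k)"
  proof -
    have n1: "1 \<le> n" and n2: "2 \<le> n" using n by simp_all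
    show ?thesis
      unfolding perp_kernel_def[of n] perp_kernel_pred[OF n1] perp_kernel_pred2[OF n2]
        centred_shifts[OF assms(1) n2] centred_shifts[OF assms(3) n2]
      using n by (intro core_interior_identity) simp
  qed
  finally show ?thesis .
qed

lemma core_matrix_first_row:
  assumes "1 \<le> k" "k < n"
  shows "core_matrix n 0 k = - 2 / (real n * (real n + 1)) - 12 / (real n * (real n + 1) * (real n + 2)) * centred n k"
proof -
  have n1: "1 \<le> n" and n2: "2 \<le> n" using n by simp_all
  have "core_matrix n 0 k = - perp_kernel n 0 k + perp_kernel (n - 1) 0 k"
    using assms n by (simp add: core_matrix_def)
  also have "\<dots> = - 2 / (real n * (real n + 1)) - 12 / (real n * (real n + 1) * (real n + 2)) * centred n k"
    unfolding perp_kernel_def[of n] perp_kernel_pred[OF n1] centred_ends[OF n1] centred_shifts(2)[OF assms(1) n2]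
    using n by (intro core_edge_identities) simp
  finally show ?thesis .
qed

lemma core_matrix_last_row:
  assumes "1 \<le> k" "k < n"
  shows "core_matrix n n k = - 2 / (real n * (real n + 1)) + 12 / (real n * (real n + 1) * (real n + 2)) * centred n k"
proof -
  have n1: "1 \<le> n" and n2: "2 \<le> n" using n by simp_all
  have "core_matrix n n k = - perp_kernel n n k + perp_kernel (n - 1) (n - 1) (k - 1)"
    using assms n by (simp add: core_matrix_def)
  also have "\<dots> = - 2 / (real n * (real n + 1)) + 12 / (real n * (real n + 1) * (real n + 2)) * centred n k"
    unfolding perp_kernel_def[of n] perp_kernel_pred[OF n1] centred_ends[OF n1] centred_shifts(1)[OF assms(1) n2]
    using n by (intro core_edge_identities) simp
  finally show ?thesis .
qed

lemma core_matrix_corners: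
  shows "core_matrix n 0 0 = 4 * (real n - 1) / (real n * (real n + 1) * (real n + 2))"
    and "core_matrix n n n = 4 * (real n - 1) / (real n * (real n + 1) * (real n + 2))"
    and "core_matrix n 0 n = 2 * (real n - 1) / ((real n + 1) * (real n + 2))"
    and "core_matrix n n 0 = 2 * (real n - 1) / ((real n + 1) * (real n + 2))"
proof -
  have n1: "1 \<le> n" using n by simp
  have "core_matrix n 0 0 = - perp_kernel n 0 0 + perp_kernel (n - 1) 0 0"
    "core_matrix n n n = - perp_kernel n n n + perp_kernel (n - 1) (n - 1) (n - 1)"
    "core_matrix n 0 n = - perp_kernel n 0 n"
    using n by (simp_all add: core_matrix_def)
  moreover have "3 \<le> real n" using n by simp
  ultimately show "core_matrix n 0 0 = 4 * (real n - 1) / (real n * (real n + 1) * (real n + 2))"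
    "core_matrix n n n = 4 * (real n - 1) / (real n * (real n + 1) * (real n + 2))"
    and n0: "core_matrix n 0 n = 2 * (real n - 1) / ((real n + 1) * (real n + 2))"
    unfolding perp_kernel_def[of n] perp_kernel_pred[OF n1] centred_ends[OF n1]
    by (simp_all only: core_corner_identities)
  then show "core_matrix n n 0 = 2 * (real n - 1) / ((real n + 1) * (real n + 2))"
    using core_matrix_sym[of n n 0] by simp
qed

lemma core_block_sum_large: "(\<Sum>k\<le>n. \<Sum>i\<le>n. (core_matrix n i k)\<^sup>2) = 8 / (real n)\<^sup>2"
proof -
  have n1: "1 \<le> n" using n by simp
  have "(\<Sum>k\<le>n. \<Sum>i\<le>n. (core_matrix n i k)\<^sup>2)
    = 2 * (4 * (real n - 1) / (real n * (real n + 1) * (real n + 2)))\<^sup>2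
      + 2 * (2 * (real n - 1) / ((real n + 1) * (real n + 2)))\<^sup>2
      + 4 * ((real n - 1) * (- 2 / (real n * (real n + 1)))\<^sup>2
        + (12 / (real n * (real n + 1) * (real n + 2)))\<^sup>2 * ((real n - 2) * (real n - 1) * real n / 12))
      + ((real n - 1)\<^sup>2 * (4 / ((real n - 1) * real n * (real n + 1)))\<^sup>2
        + (144 / ((real n - 2) * (real n - 1) * real n * (real n + 1) * (real n + 2)))\<^sup>2
          * ((real n - 2) * (real n - 1) * real n / 12)\<^sup>2)"
    by (rule sum_sq_centred_block[OF n1 core_matrix_corners])
       (use core_matrix_first_row core_matrix_last_row core_matrix_interior core_matrix_sym in auto)
  also have "\<dots> = 8 / (real n)\<^sup>2"
    using n by (intro core_block_identity) simp
  finally show ?thesis .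
qed

end

lemma core_block_sum_eq:
  "(\<Sum>k\<le>n. \<Sum>i\<le>n. (core_matrix n i k)\<^sup>2)
    = 8 / (real n)\<^sup>2 - (if n = 1 then 8 else 0) - (if n = 2 then 1 else 0)"
proof -
  consider "n = 0" | "n = 1" | "n = 2" | "3 \<le> n" by linarith
  then show ?thesis
  proof cases
    case 1 then show ?thesis by (simp add: core_matrix_def)
  next
    case 2 then show ?thesis by (simp add: core_matrix_def perp_kernel_def centred_def)
  next
    case 3 then show ?thesis
      by (simp add: core_matrix_def perp_kernel_def centred_def numeral_2_eq_2 power2_eq_square)
  next
    case 4 then show ?thesis by (simp add: core_block_sum_large)
  qed
qed

lemma core_block_sums: "(\<lambda>n. \<Sum>k\<le>n. \<Sum>i\<le>n. (core_matrix n i k)\<^sup>2) sums (4/3 * pi\<^sup>2 - 9)"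
proof -
  have "(\<lambda>n. 1 / (real n)\<^sup>2) sums (pi\<^sup>2 / 6)"
    using inverse_squares_sums sums_iff_shift[of "\<lambda>n. 1 / (real n)\<^sup>2" 1] by (simp add: add.commute)
  then have "(\<lambda>n. 8 * (1 / (real n)\<^sup>2) - (if n = 1 then 8 else 0) - (if n = 2 then 1 else 0))
      sums (8 * (pi\<^sup>2 / 6) - 8 - 1)"
    by (intro sums_diff sums_mult) (simp_all add: sums_single[of _ "\<lambda>_. _", simplified])
  then show ?thesis by (simp add: core_block_sum_eq)
qed

lemma homogeneous_basis2: "homogeneous (i + j) (basis2 (i, j))"
  unfolding homogeneous_def basis2_def by auto

lemma homogeneous_core_op:
  assumes "homogeneous n f" shows "homogeneous n (core_op Mzw f)"
  unfolding homogeneous_def by (simp add: core_op_homogeneous[OF assms])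

lemma sum_diag_basis2:
  fixes c :: "nat \<Rightarrow> complex"
  assumes "k + j = n"
  shows "(\<Sum>i\<le>n. c i * basis2 (k, j) (i, n - i)) = c k"
proof -
  have "(\<Sum>i\<le>n. c i * basis2 (k, j) (i, n - i)) = (\<Sum>i\<le>n. if i = k then c k else 0)"
    by (rule sum.cong) (use assms in \<open>auto simp: basis2_def\<close>)
  then show ?thesis using assms by simp
qed

lemma core_op_basis2:
  "core_op Mzw (basis2 (k, j)) (i', j')
    = (if i' + j' = k + j then of_real (core_matrix (k + j) i' k) else 0)"
  unfolding core_op_homogeneous[OF homogeneous_basis2] by (simp add: sum_diag_basis2)

lemma norm2_core_op_basis2:
  "(norm2 (core_op Mzw (basis2 (k, j))))\<^sup>2 = (\<Sum>i\<le>k + j. (core_matrix (k + j) i k)\<^sup>2)"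
  unfolding norm2_homogeneous[OF homogeneous_core_op[OF homogeneous_basis2]] core_op_basis2 by simp

lemma inner2_core_op_sq_basis2:
  "inner2 (core_op Mzw (core_op Mzw (basis2 (k, j)))) (basis2 (k, j))
    = of_real (\<Sum>i\<le>k + j. (core_matrix (k + j) i k)\<^sup>2)"
proof -
  let ?n = "k + j"
  have "inner2 (core_op Mzw (core_op Mzw (basis2 (k, j)))) (basis2 (k, j))
      = core_op Mzw (core_op Mzw (basis2 (k, j))) (k, j)"
    unfolding inner2_homogeneous[OF homogeneous_core_op[OF homogeneous_core_op[OF homogeneous_basis2]]]
    using sum_diag_basis2[of k j ?n "\<lambda>i. core_op Mzw (core_op Mzw (basis2 (k, j))) (i, ?n - i)"]
    by (simp add: basis2_def if_distrib[of cnj] cong: if_cong)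
  also have "\<dots> = (\<Sum>i\<le>?n. of_real (core_matrix ?n k i) * of_real (core_matrix ?n i k))"
    unfolding core_op_homogeneous[OF homogeneous_core_op[OF homogeneous_basis2]] core_op_basis2 by simp
  also have "\<dots> = of_real (\<Sum>i\<le>?n. (core_matrix ?n i k)\<^sup>2)"
    by (simp add: core_matrix_sym[of ?n k] power2_eq_square)
  finally show ?thesis .
qed

theorem corollary3p1:
  shows "hilbert_schmidt (core_op (gen_submodule zw_sq))
    \<and> hs_norm_sq (core_op (gen_submodule zw_sq)) = 4/3 * pi\<^sup>2 - 9
    \<and> trace2 (core_op (gen_submodule zw_sq) \<circ> core_op (gen_submodule zw_sq))
        = complex_of_real (4/3 * pi\<^sup>2 - 9)"
proof -
  define S where "S = 4/3 * pi\<^sup>2 - 9"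
  define g where "g a = (norm2 (core_op Mzw (basis2 a)))\<^sup>2" for a
  have "g (k, n - k) = (\<Sum>i\<le>n. (core_matrix n i k)\<^sup>2)" if "k \<le> n" for k n
    using norm2_core_op_basis2[of k "n - k"] that by (simp add: g_def)
  then have "(\<lambda>n. \<Sum>k\<le>n. g (k, n - k)) sums S"
    using core_block_sums by (simp add: S_def)
  then have g: "(g has_sum S) UNIV"
    by (subst has_sum_iff_diagonal_sums) (simp_all add: g_def)
  have "inner2 ((core_op Mzw \<circ> core_op Mzw) (basis2 a)) (basis2 a) = of_real (g a)" for a
    by (cases a) (simp add: g_def norm2_core_op_basis2 inner2_core_op_sq_basis2)
  then have "((\<lambda>a. inner2 ((core_op Mzw \<circ> core_op Mzw) (basis2 a)) (basis2 a)) has_sum of_real S) UNIV"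
    using has_sum_of_real[OF g] by simp
  then show ?thesis
    using g unfolding gen_submodule_zw_sq hilbert_schmidt_def hs_norm_sq_def trace2_def S_def g_def
    by (auto dest: has_sum_imp_summable infsumI)
qed

end
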